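(* Let $\mathfrak{M}$ be a model, $x$ a variable, $\bar z=z_1,\dots,z_m$ a list of variables distinct from $x$, and $\psi,\theta$ formulas such that no variable of $\bar z$ occurs free in $\theta$. If $\psi$ is non-dependent of $x$ in $\mathfrak{M}$ provided $\theta$, then $$[\![\forall x\exists\bar z(\theta\to\psi)]\!]^{\mathfrak{M}}=[\![\exists x\theta\to\exists\bar z\,\forall x(\theta\to\psi)]\!]^{\mathfrak{M}},$$ and consequently, if moreover $\mathfrak{M}\models\exists x\theta$, then $[\![\forall x\exists\bar z(\theta\to\psi)]\!]^{\mathfrak{M}}=[\![\exists\bar z\,\forall x(\theta\to\psi)]\!]^{\mathfrak{M}}$.
   Context: Work in first-order logic with equality over a relational signature, with countably many variables $v_1,v_2,\dots$. A model $\mathfrak{M}$ has nonempty universe $M$; assignments are $\bar a\in M^\omega$ ($a_i$ is the value of $v_i$); for $x=v_i$, $b\in M$, $\bar a^x_b$ is $\bar a$ with $i$-th entry replaced by $b$. $[\![\varphi]\!]^{\mathfrak{M}}=\{\bar a\in M^\omega:\mathfrak{M}\models\varphi[\bar a]\}$; $\mathfrak{M}\models\chi$ means every $\bar a$ satisfies $\chi$; $\exists\bar z$ abbreviates $\exists z_1\dots\exists z_m$. Definition: $\psi$ is non-dependent of $x$ in $\mathfrak{M}$ provided $\theta$ iff for all $\bar a\in M^\omega$, $b\in M$: if $\mathfrak{M}\models\theta[\bar a]$ and $\mathfrak{M}\models\theta[\bar a^x_b]$ then ($\mathfrak{M}\models\psi[\bar a]\iff\mathfrak{M}\models\psi[\bar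 a^x_b]$). *)

theory Defs
  imports Main
begin

text \<open>First-order logic with equality over a relational signature.
  Variables are natural numbers (variable v_(i+1) is index i);
  relation symbols are of type 'p and are applied to lists of variables.\<close>

datatype 'p fm =
    Eq nat nat
  | Rel 'p "nat list"
  | Neg "'p fm"
  | Conj "'p fm" "'p fm"
  | Disj "'p fm" "'p fm"
  | Imp "'p fm" "'p fm"
  | Ex nat "'p fm"
  | All nat "'p fm"

fun fv :: "'p fm \<Rightarrow> nat set" where
  "fv (Eq i j) = {i, j}"
| "fv (Rel P xs) = set xs"
| "fv (Neg f) = fv f"
| "fv (Conj f g) = fv f \<union> fv g"
| "fv (Disj f g) = fv f \<union> fv g"
| "fv (Imp f g) = fv f \<union> fv g"
| "fv (Ex x f) = fv f - {x}"
| "fv (All x f) = fv f - {x}"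

fun sat :: "'a set \<Rightarrow> ('p \<Rightarrow> 'a list \<Rightarrow> bool) \<Rightarrow> (nat \<Rightarrow> 'a) \<Rightarrow> 'p fm \<Rightarrow> bool" where
  "sat M I a (Eq i j) = (a i = a j)"
| "sat M I a (Rel P xs) = I P (map a xs)"
| "sat M I a (Neg f) = (\<not> sat M I a f)"
| "sat M I a (Conj f g) = (sat M I a f \<and> sat M I a g)"
| "sat M I a (Disj f g) = (sat M I a f \<or> sat M I a g)"
| "sat M I a (Imp f g) = (sat M I a f \<longrightarrow> sat M I a g)"
| "sat M I a (Ex x f) = (\<exists>b\<in>M. sat M I (a(x := b)) f)"
| "sat M I a (All x f) = (\<forall>b\<in>M. sat M I (a(x := b)) f)"

definition assignments :: "'a set \<Rightarrow> (nat \<Rightarrow> 'a) set" where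
  "assignments M = {a. \<forall>i. a i \<in> M}"

definition denot :: "'a set \<Rightarrow> ('p \<Rightarrow> 'a list \<Rightarrow> bool) \<Rightarrow> 'p fm \<Rightarrow> (nat \<Rightarrow> 'a) set" where
  "denot M I f = {a \<in> assignments M. sat M I a f}"

definition models :: "'a set \<Rightarrow> ('p \<Rightarrow> 'a list \<Rightarrow> bool) \<Rightarrow> 'p fm \<Rightarrow> bool" where
  "models M I f = (\<forall>a\<in>assignments M. sat M I a f)"

definition exs :: "nat list \<Rightarrow> 'p fm \<Rightarrow> 'p fm" where
  "exs zs f = foldr Ex zs f"

definition non_dependent :: "'a set \<Rightarrow> ('p \<Rightarrow> 'a list \<Rightarrow> bool) \<Rightarrow> 'p fm \<Rightarrow> nat \<Rightarrow> 'p fm \<Rightarrow> bool" where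
  "non_dependent M I \<psi> x \<theta> =
     (\<forall>a\<in>assignments M. \<forall>b\<in>M.
        sat M I a \<theta> \<longrightarrow> sat M I (a(x := b)) \<theta> \<longrightarrow>
        (sat M I a \<psi> \<longleftrightarrow> sat M I (a(x := b)) \<psi>))"

end

theory Submission
  imports Defs
begin

text \<open>For \<open>a\<close> satisfying \<open>\<forall>x \<exists>z\<^sub>1\<dots>z\<^sub>m (\<theta> \<longrightarrow> \<psi>)\<close> and \<open>\<exists>x \<theta>\<close>, fix a value \<open>b\<close> of \<open>x\<close>
  with \<open>\<theta>\<close> true and choose witnesses for the \<open>z\<^sub>j\<close>; since the \<open>z\<^sub>j\<close> do not occur in \<open>\<theta>\<close>,
  \<open>\<theta>\<close> stays true, hence so does \<open>\<psi>\<close>. These witnesses then work for every value of \<open>x\<close>: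
  changing \<open>x\<close> between values at which \<open>\<theta>\<close> holds does not change \<open>\<psi>\<close>, by non-dependence.
  Conversely \<open>\<exists>\<forall>\<close> always implies \<open>\<forall>\<exists>\<close>, and if \<open>\<theta>\<close> fails for all \<open>x\<close> the implication
  \<open>\<theta> \<longrightarrow> \<psi>\<close> holds trivially.\<close>

lemma sat_cong_fv:
  assumes "\<forall>i\<in>fv f. a i = a' i"
  shows "sat M I a f = sat M I a' f"
  using assms
proof (induction f arbitrary: a a')
  case (Rel P xs)
  then have "map a xs = map a' xs" by (intro map_cong) auto
  then show ?case by (simp only: sat.simps)
next
  case (Ex z f)
  then have "\<forall>b. sat M I (a(z := b)) f = sat M I (a'(z := b)) f" by simp
  then show ?case by simp
next
  case (All z f)
  then have "\<forall>b. sat M I (a(z := b)) f = sat M I (a'(z := b)) f" by simp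
  then show ?case by simp
qed (simp_all add: ball_Un, blast+)

definition variant_on :: "'a set \<Rightarrow> nat set \<Rightarrow> (nat \<Rightarrow> 'a) \<Rightarrow> (nat \<Rightarrow> 'a) \<Rightarrow> bool" where
  "variant_on M Z a a' \<longleftrightarrow> (\<forall>i. i \<notin> Z \<longrightarrow> a' i = a i) \<and> (\<forall>i\<in>Z. a' i \<in> M)"

lemma variant_on_insert:
  "variant_on M (insert z Z) a a' \<longleftrightarrow> (\<exists>b\<in>M. variant_on M Z (a(z := b)) a')"
proof
  assume "variant_on M (insert z Z) a a'"
  then show "\<exists>b\<in>M. variant_on M Z (a(z := b)) a'"
    by (intro bexI[of _ "a' z"]) (auto simp: variant_on_def)
next
  assume "\<exists>b\<in>M. variant_on M Z (a(z := b)) a'"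
  then obtain b where "b \<in> M" "variant_on M Z (a(z := b)) a'" ..
  then show "variant_on M (insert z Z) a a'"
    unfolding variant_on_def by (metis fun_upd_apply insert_iff)
qed

lemma sat_exs_iff:
  "sat M I a (exs zs f) \<longleftrightarrow> (\<exists>a'. variant_on M (set zs) a a' \<and> sat M I a' f)"
proof (induction zs arbitrary: a)
  case Nil
  have "variant_on M {} a a' \<longleftrightarrow> a' = a" for a'
    by (auto simp: variant_on_def)
  then show ?case by (simp add: exs_def)
next
  case (Cons z zs)
  have "sat M I a (exs (z # zs) f) \<longleftrightarrow> (\<exists>b\<in>M. sat M I (a(z := b)) (exs zs f))"
    by (simp add: exs_def)
  also have "\<dots> \<longleftrightarrow> (\<exists>b\<in>M. \<exists>a'. variant_on M (set zs) (a(z := b)) a' \<and> sat M I a' f)"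
    by (simp only: Cons.IH)
  also have "\<dots> \<longleftrightarrow> (\<exists>a'. variant_on M (set (z # zs)) a a' \<and> sat M I a' f)"
    by (auto simp: variant_on_insert)
  finally show ?case .
qed

lemma sat_variant_on_iff:
  assumes "variant_on M Z a a'" and "Z \<inter> fv f = {}"
  shows "sat M I a' f = sat M I a f"
  using assms by (intro sat_cong_fv) (auto simp: variant_on_def)

lemma sat_exs_of_sat:
  assumes "a \<in> assignments M" and "sat M I a f"
  shows "sat M I a (exs zs f)"
  using assms by (auto simp: sat_exs_iff variant_on_def assignments_def)

lemma sat_All_exs_of_exs_All:
  assumes "x \<notin> set zs" and "sat M I a (exs zs (All x f))"
  shows "sat M I a (All x (exs zs f))"
proof -
  obtain a' where a': "variant_on M (set zs) a a'" "sat M I a' (All x f)"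
    using assms(2) by (auto simp: sat_exs_iff)
  have "variant_on M (set zs) (a(x := b)) (a'(x := b))" for b
    using a'(1) assms(1) by (auto simp: variant_on_def)
  then show ?thesis using a'(2) by (auto simp: sat_exs_iff)
qed

lemma sat_exs_All_Imp_of_All_exs_Imp:
  assumes "x \<notin> set zs" and "set zs \<inter> fv \<theta> = {}" and "non_dependent M I \<psi> x \<theta>"
    and "a \<in> assignments M"
    and "sat M I a (All x (exs zs (Imp \<theta> \<psi>)))" and "sat M I a (Ex x \<theta>)"
  shows "sat M I a (exs zs (All x (Imp \<theta> \<psi>)))"
proof -
  obtain b where b: "b \<in> M" "sat M I (a(x := b)) \<theta>"
    using assms(6) by auto
  then obtain c where c: "variant_on M (set zs) (a(x := b)) c" "sat M I c (Imp \<theta> \<psi>)"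
    using assms(5) by (auto simp: sat_exs_iff)
  have "sat M I c \<theta>"
    using sat_variant_on_iff[OF c(1) assms(2)] b(2) by simp
  with c(2) have c_\<psi>: "sat M I c \<psi>" by simp
  have c_assignment: "c \<in> assignments M"
    using c(1) assms(4) b(1) by (auto simp: variant_on_def assignments_def)
  have "sat M I (c(x := b')) \<psi>" if "b' \<in> M" "sat M I (c(x := b')) \<theta>" for b'
    using assms(3) c_assignment \<open>sat M I c \<theta>\<close> c_\<psi> that
    unfolding non_dependent_def by blast
  then have "sat M I (c(x := a x)) (All x (Imp \<theta> \<psi>))" by simp
  moreover have "variant_on M (set zs) a (c(x := a x))"
    using c(1) assms(1) by (auto simp: variant_on_def)
  ultimately show ?thesis by (auto simp: sat_exs_iff)
qed

lemma sat_All_exs_Imp_iff: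
  assumes "x \<notin> set zs" and "set zs \<inter> fv \<theta> = {}" and "non_dependent M I \<psi> x \<theta>"
    and "a \<in> assignments M"
  shows "sat M I a (All x (exs zs (Imp \<theta> \<psi>)))
     \<longleftrightarrow> sat M I a (Imp (Ex x \<theta>) (exs zs (All x (Imp \<theta> \<psi>))))"
proof
  assume "sat M I a (All x (exs zs (Imp \<theta> \<psi>)))"
  then show "sat M I a (Imp (Ex x \<theta>) (exs zs (All x (Imp \<theta> \<psi>))))"
    using sat_exs_All_Imp_of_All_exs_Imp[OF assms] by simp
next
  assume rhs: "sat M I a (Imp (Ex x \<theta>) (exs zs (All x (Imp \<theta> \<psi>))))"
  show "sat M I a (All x (exs zs (Imp \<theta> \<psi>)))"
  proof (cases "sat M I a (Ex x \<theta>)")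
    case True
    then show ?thesis using rhs sat_All_exs_of_exs_All[OF assms(1)] by simp
  next
    case False
    have "a(x := b) \<in> assignments M" if "b \<in> M" for b
      using assms(4) that by (simp add: assignments_def)
    then show ?thesis using False by (auto intro: sat_exs_of_sat)
  qed
qed

theorem mainTheorem9:
  fixes M :: "'a set" and I :: "'p \<Rightarrow> 'a list \<Rightarrow> bool"
    and x :: nat and zs :: "nat list" and \<psi> \<theta> :: "'p fm"
  assumes "M \<noteq> {}"
    and "x \<notin> set zs"
    and "\<forall>z\<in>set zs. z \<notin> fv \<theta>"
    and "non_dependent M I \<psi> x \<theta>"
  shows "denot M I (All x (exs zs (Imp \<theta> \<psi>)))
           = denot M I (Imp (Ex x \<theta>) (exs zs (All x (Imp \<theta> \<psi>))))
       \<and> (models M I (Ex x \<theta>) \<longrightarrow>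
           denot M I (All x (exs zs (Imp \<theta> \<psi>))) = denot M I (exs zs (All x (Imp \<theta> \<psi>))))"
proof -
  have "set zs \<inter> fv \<theta> = {}" using assms(3) by blast
  note pointwise = sat_All_exs_Imp_iff[OF assms(2) this assms(4)]
  have denot_eq: "denot M I (All x (exs zs (Imp \<theta> \<psi>)))
           = denot M I (Imp (Ex x \<theta>) (exs zs (All x (Imp \<theta> \<psi>))))"
    unfolding denot_def using pointwise by blast
  moreover have "denot M I (All x (exs zs (Imp \<theta> \<psi>))) = denot M I (exs zs (All x (Imp \<theta> \<psi>)))"
    if "models M I (Ex x \<theta>)"
    using that denot_eq unfolding models_def denot_def by auto
  ultimately show ?thesis by blast
qed

end
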